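(* For all integers $t$ and $\Delta$, the class of finite graphs of treewidth at most $t$ and maximum degree at most $\Delta$ has asymptotic dimension at most $1$.
   Context: Graphs are metric spaces with the shortest-path distance. Treewidth is the minimum width of a tree-decomposition (width being the maximum bag size minus one). For a metric space $(X,d)$, a family $\mathcal U$ of subsets is $D$-bounded if every member has diameter at most $D$, and $r$-disjoint if points in different members are at distance $>r$. A function $D:\mathbb{R}^+\to\mathbb{R}^+$ is an $n$-dimensional control function for $X$ if for every $r>0$ there is a cover $\mathcal U=\mathcal U_1\cup\dots\cup\mathcal U_{n+1}$ of $X$ with each $\mathcal U_i$ $r$-disjoint and each member $D(r)$-bounded; a class has asymptotic dimension at most $n$ if one such function works for all its members. *)

theory Defs
  imports Main "HOL-Library.Extended_Real"
begin

definition fin_graph :: "'a set \<Rightarrow> ('a \<times> 'a) set \<Rightarrow> bool" where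
  "fin_graph V E \<longleftrightarrow> finite V \<and> E \<subseteq> V \<times> V \<and> sym E \<and> (\<forall>x. (x, x) \<notin> E)"

definition is_walk :: "('a \<times> 'a) set \<Rightarrow> 'a list \<Rightarrow> bool" where
  "is_walk E xs \<longleftrightarrow> xs \<noteq> [] \<and> (\<forall>i. Suc i < length xs \<longrightarrow> (xs ! i, xs ! Suc i) \<in> E)"

text \<open>Shortest-path distance (infinite between different components).\<close>
definition gdist :: "('a \<times> 'a) set \<Rightarrow> 'a \<Rightarrow> 'a \<Rightarrow> ereal" where
  "gdist E u v = (INF xs \<in> {xs. is_walk E xs \<and> hd xs = u \<and> last xs = v}.
                    ereal (real (length xs - 1)))"

definition connected_in :: "('a \<times> 'a) set \<Rightarrow> 'a set \<Rightarrow> bool" where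
  "connected_in E S \<longleftrightarrow> (\<forall>u\<in>S. \<forall>v\<in>S. \<exists>xs. is_walk E xs \<and> set xs \<subseteq> S \<and> hd xs = u \<and> last xs = v)"

text \<open>A tree: a nonempty connected finite graph without cycles
  (every edge is a bridge, i.e. lies on no cycle).\<close>
definition is_tree :: "'b set \<Rightarrow> ('b \<times> 'b) set \<Rightarrow> bool" where
  "is_tree N F \<longleftrightarrow> fin_graph N F \<and> N \<noteq> {} \<and> connected_in F N \<and>
     (\<forall>(x, y) \<in> F. \<not> (\<exists>xs. is_walk (F - {(x, y), (y, x)}) xs \<and> hd xs = x \<and> last xs = y))"

definition tree_decomposition ::
  "'a set \<Rightarrow> ('a \<times> 'a) set \<Rightarrow> nat set \<Rightarrow> (nat \<times> nat) set \<Rightarrow> (nat \<Rightarrow> 'a set) \<Rightarrow> bool" where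
  "tree_decomposition V E N F B \<longleftrightarrow>
     is_tree N F \<and>
     (\<forall>n\<in>N. B n \<subseteq> V) \<and>
     (\<forall>v\<in>V. \<exists>n\<in>N. v \<in> B n) \<and>
     (\<forall>(u, v)\<in>E. \<exists>n\<in>N. u \<in> B n \<and> v \<in> B n) \<and>
     (\<forall>v\<in>V. connected_in F {n\<in>N. v \<in> B n})"

text \<open>Width = maximum bag size minus one; treewidth = minimum width.
  (Integer-valued, so the empty graph has treewidth -1.)\<close>
definition td_width :: "nat set \<Rightarrow> (nat \<Rightarrow> 'a set) \<Rightarrow> int" where
  "td_width N B = int (Max ((\<lambda>n. card (B n)) ` N)) - 1"

definition treewidth :: "'a set \<Rightarrow> ('a \<times> 'a) set \<Rightarrow> int" where
  "treewidth V E = (LEAST k. \<exists>N F B. tree_decomposition V E N F B \<and> td_width N B = k)"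

definition max_degree :: "'a set \<Rightarrow> ('a \<times> 'a) set \<Rightarrow> nat" where
  "max_degree V E = Max (insert 0 ((\<lambda>v. card {u. (v, u) \<in> E}) ` V))"

definition r_disjoint :: "('a \<times> 'a) set \<Rightarrow> real \<Rightarrow> 'a set set \<Rightarrow> bool" where
  "r_disjoint E r \<U> \<longleftrightarrow>
     (\<forall>A\<in>\<U>. \<forall>B\<in>\<U>. A \<noteq> B \<longrightarrow> (\<forall>x\<in>A. \<forall>y\<in>B. gdist E x y > ereal r))"

definition D_bounded :: "('a \<times> 'a) set \<Rightarrow> real \<Rightarrow> 'a set set \<Rightarrow> bool" where
  "D_bounded E D \<U> \<longleftrightarrow> (\<forall>A\<in>\<U>. \<forall>x\<in>A. \<forall>y\<in>A. gdist E x y \<le> ereal D)"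

definition control_function :: "nat \<Rightarrow> (real \<Rightarrow> real) \<Rightarrow> 'a set \<Rightarrow> ('a \<times> 'a) set \<Rightarrow> bool" where
  "control_function n D V E \<longleftrightarrow>
     (\<forall>r>0. \<exists>\<U> :: nat \<Rightarrow> 'a set set.
        (\<Union>i\<le>n. \<Union>(\<U> i)) = V \<and>
        (\<forall>i\<le>n. r_disjoint E r (\<U> i) \<and> D_bounded E (D r) (\<U> i)))"

definition asdim_at_most :: "nat \<Rightarrow> ('a set \<times> ('a \<times> 'a) set) set \<Rightarrow> bool" where
  "asdim_at_most n C \<longleftrightarrow>
     (\<exists>D :: real \<Rightarrow> real. (\<forall>r>0. D r > 0) \<and> (\<forall>(V, E)\<in>C. control_function n D V E))"

end

(*
  Fix r > 0 and let H join the vertices of G at distance at most r. If G has maximum degree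
  at most d, then H has maximum degree at most (d + 1)^r; if G has a tree decomposition with
  bags of size at most k, then the H-neighbourhood of a centroid bag is a separator of H of
  size at most k (d + 1)^r splitting any given vertex set W evenly. Iterating such separators
  splits W into arbitrarily small fractions at bounded cost, and a bounded-degree graph with
  these separators has a 2-colouring whose monochromatic components have bounded size: colour
  a separator of the precoloured set, then colour each remaining component recursively with its
  (small) boundary precoloured by the other colour. The monochromatic components of H of one
  colour are r-disjoint in G and have G-diameter bounded in terms of r, k and d, so the two
  colour classes form the two families required of a control function.
*)

theory Submission
  imports Defs
begin

section \<open>Walks and graph distance\<close>

lemma is_walk_singleton [simp]: "is_walk E [x]"
  by (simp add: is_walk_def)

lemma not_is_walk_Nil [simp]: "\<not> is_walk E []"
  by (simp add: is_walk_def)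

lemma is_walk_Cons_Cons [simp]:
  "is_walk E (x # y # xs) \<longleftrightarrow> (x, y) \<in> E \<and> is_walk E (y # xs)"
  unfolding is_walk_def by (auto simp: less_Suc_eq_0_disj nth_Cons split: nat.splits)

lemma is_walk_append:
  "is_walk E xs \<Longrightarrow> is_walk E ys \<Longrightarrow> (last xs, hd ys) \<in> E \<Longrightarrow> is_walk E (xs @ ys)"
proof (induction xs rule: induct_list012)
  case (2 x)
  then show ?case by (cases ys) auto
qed auto

lemma is_walk_append_tl:
  assumes "is_walk E xs" "is_walk E ys" "last xs = hd ys"
  shows "is_walk E (xs @ tl ys)"
proof (cases "tl ys")
  case (Cons z zs)
  with assms(2) have "ys = hd ys # z # zs"
    by (metis list.collapse not_is_walk_Nil)
  with assms show ?thesis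
    using is_walk_append[OF assms(1), of "tl ys"] Cons by (metis is_walk_Cons_Cons list.sel(1))
qed (use assms in simp)

lemma walk_concat:
  assumes "is_walk E xs" "is_walk E ys" "last xs = hd ys"
  shows "\<exists>zs. is_walk E zs \<and> hd zs = hd xs \<and> last zs = last ys \<and>
    length zs = length xs + length ys - 1"
proof (intro exI conjI)
  have "xs \<noteq> []" "ys \<noteq> []" using assms by auto
  then show "hd (xs @ tl ys) = hd xs" "last (xs @ tl ys) = last ys"
    "length (xs @ tl ys) = length xs + length ys - 1"
    using assms(3) by (cases ys, auto)+
qed (rule is_walk_append_tl[OF assms])

lemma is_walk_rev: "sym E \<Longrightarrow> is_walk E xs \<Longrightarrow> is_walk E (rev xs)"
proof (induction xs rule: induct_list012)
  case (3 x y zs)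
  then show ?case
    using is_walk_append[of E "rev (y # zs)" "[x]"] by (auto dest: symD)
qed auto

lemma is_walk_mono: "is_walk E xs \<Longrightarrow> E \<subseteq> E' \<Longrightarrow> is_walk E' xs"
  unfolding is_walk_def by blast

lemma is_walk_nth: "is_walk E xs \<Longrightarrow> Suc i < length xs \<Longrightarrow> (xs ! i, xs ! Suc i) \<in> E"
  by (simp add: is_walk_def)

lemma is_walk_take: "is_walk E xs \<Longrightarrow> 0 < n \<Longrightarrow> is_walk E (take n xs)"
  unfolding is_walk_def by auto

lemma set_walk_subset:
  "is_walk E xs \<Longrightarrow> E \<subseteq> V \<times> V \<Longrightarrow> hd xs \<in> V \<Longrightarrow> set xs \<subseteq> V"
  by (induction xs rule: induct_list012) auto

lemma walk_prefix:
  assumes "is_walk E xs" "w \<in> set xs"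
  shows "\<exists>ys. is_walk E ys \<and> hd ys = hd xs \<and> last ys = w \<and> length ys \<le> length xs"
proof -
  obtain i where i: "i < length xs" "xs ! i = w" using assms(2) by (auto simp: in_set_conv_nth)
  have "take (Suc i) xs \<noteq> []" using i(1) by (cases xs) auto
  then show ?thesis using is_walk_take[OF assms(1)] i
    by (intro exI[of _ "take (Suc i) xs"]) (auto simp: last_conv_nth hd_conv_nth)
qed

lemma gdist_le_walk:
  "is_walk E xs \<Longrightarrow> gdist E (hd xs) (last xs) \<le> ereal (real (length xs - 1))"
  unfolding gdist_def by (rule INF_lower) simp

lemma gdist_le_iff:
  "gdist E u v \<le> ereal r \<longleftrightarrow>
    (\<exists>xs. is_walk E xs \<and> hd xs = u \<and> last xs = v \<and> real (length xs - 1) \<le> r)"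
proof
  let ?W = "{xs. is_walk E xs \<and> hd xs = u \<and> last xs = v}"
  assume le: "gdist E u v \<le> ereal r"
  have "?W \<noteq> {}"
  proof
    assume "?W = {}"
    with le show False by (simp add: gdist_def top_ereal_def)
  qed
  then obtain xs where xs: "xs \<in> ?W" and min: "\<And>ys. ys \<in> ?W \<Longrightarrow> length xs \<le> length ys"
    using ex_has_least_nat[of "\<lambda>xs. xs \<in> ?W" _ length] by blast
  have "gdist E u v = ereal (real (length xs - 1))"
    unfolding gdist_def
    by (rule antisym, rule INF_lower[OF xs], rule INF_greatest) (use min in \<open>auto simp: diff_le_mono\<close>)
  with le xs show "\<exists>xs. is_walk E xs \<and> hd xs = u \<and> last xs = v \<and> real (length xs - 1) \<le> r"
    by auto
next
  assume "\<exists>xs. is_walk E xs \<and> hd xs = u \<and> last xs = v \<and> real (length xs - 1) \<le> r"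
  then show "gdist E u v \<le> ereal r"
    using gdist_le_walk by (metis ereal_less_eq(3) order_trans)
qed

lemma gdist_refl: "0 \<le> r \<Longrightarrow> gdist E u u \<le> ereal r"
  unfolding gdist_le_iff by (intro exI[of _ "[u]"]) simp

lemma gdist_sym_le:
  assumes "sym E" "gdist E x y \<le> ereal r"
  shows "gdist E y x \<le> ereal r"
proof -
  obtain xs where xs: "is_walk E xs" "hd xs = x" "last xs = y" "real (length xs - 1) \<le> r"
    using assms(2) unfolding gdist_le_iff by blast
  then have "xs \<noteq> []" by auto
  with xs show ?thesis
    unfolding gdist_le_iff using is_walk_rev[OF assms(1) xs(1)]
    by (intro exI[of _ "rev xs"]) (auto simp: hd_rev last_rev)
qed

lemma gdist_triangle_le:
  assumes "gdist E x y \<le> ereal a" "gdist E y z \<le> ereal b"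
  shows "gdist E x z \<le> ereal (a + b)"
proof -
  obtain xs where xs: "is_walk E xs" "hd xs = x" "last xs = y" "real (length xs - 1) \<le> a"
    using assms(1) unfolding gdist_le_iff by blast
  obtain ys where ys: "is_walk E ys" "hd ys = y" "last ys = z" "real (length ys - 1) \<le> b"
    using assms(2) unfolding gdist_le_iff by blast
  obtain zs where "is_walk E zs" "hd zs = x" "last zs = z" "length zs = length xs + length ys - 1"
    using walk_concat[OF xs(1) ys(1)] xs ys by auto
  moreover have "xs \<noteq> []" "ys \<noteq> []" using xs ys by auto
  ultimately show ?thesis
    unfolding gdist_le_iff using xs(4) ys(4) by (intro exI[of _ zs]) auto
qed

lemma gdist_walk_vertex_le:
  assumes "is_walk E xs" "w \<in> set xs"
  shows "gdist E (hd xs) w \<le> ereal (real (length xs - 1))"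
  using walk_prefix[OF assms] unfolding gdist_le_iff by (auto intro: diff_le_mono)

section \<open>Components of induced subgraphs\<close>

text \<open>Note that this is {u} whenever u \<notin> A.\<close>
definition component :: "('a \<times> 'a) set \<Rightarrow> 'a set \<Rightarrow> 'a \<Rightarrow> 'a set" where
  "component H A u = {v. (u, v) \<in> (Restr H A)\<^sup>*}"

lemma component_refl [simp]: "u \<in> component H A u"
  by (simp add: component_def)

lemma component_subset_insert: "component H A u \<subseteq> insert u A"
proof
  fix w assume "w \<in> component H A u"
  then have "(u, w) \<in> (Restr H A)\<^sup>*" by (simp add: component_def)
  then show "w \<in> insert u A" by (induction rule: rtrancl_induct) auto
qed

lemma component_subset: "u \<in> A \<Longrightarrow> component H A u \<subseteq> A"
  using component_subset_insert by fastforce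

lemma component_mono: "A \<subseteq> B \<Longrightarrow> component H A u \<subseteq> component H B u"
  unfolding component_def using rtrancl_mono[of "Restr H A" "Restr H B"] by blast

lemma component_step:
  "v \<in> component H A u \<Longrightarrow> (v, w) \<in> H \<Longrightarrow> v \<in> A \<Longrightarrow> w \<in> A \<Longrightarrow> w \<in> component H A u"
  unfolding component_def by (auto intro: rtrancl_into_rtrancl)

lemma component_eq:
  assumes "sym H" "v \<in> component H A u"
  shows "component H A v = component H A u"
proof -
  have "sym ((Restr H A)\<^sup>*)"
    using assms(1) by (intro sym_rtrancl) (auto simp: sym_def)
  with assms(2) show ?thesis
    unfolding component_def by (auto dest: symD intro: rtrancl_trans)
qed

lemma component_disjoint:
  assumes "sym H" "component H A u \<noteq> component H A v"
  shows "component H A u \<inter> component H A v = {}"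
proof -
  have False if "w \<in> component H A u" "w \<in> component H A v" for w
    using component_eq[OF assms(1) that(1)] component_eq[OF assms(1) that(2)] assms(2) by simp
  then show ?thesis by blast
qed

lemma component_induct [consumes 1, case_names refl step]:
  assumes "w \<in> component H A u" "P u"
    and "\<And>y z. y \<in> component H A u \<Longrightarrow> (y, z) \<in> H \<Longrightarrow> y \<in> A \<Longrightarrow> z \<in> A \<Longrightarrow> P y \<Longrightarrow> P z"
  shows "P w"
proof -
  have "(u, w) \<in> (Restr H A)\<^sup>*" using assms(1) by (simp add: component_def)
  then show ?thesis
    by (induction rule: rtrancl_induct) (use assms(2,3) in \<open>auto simp: component_def\<close>)
qed

lemma component_confined:
  assumes "\<And>x y. (x, y) \<in> H \<Longrightarrow> x \<in> T \<Longrightarrow> y \<in> A \<Longrightarrow> y \<in> T" "u \<in> T"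
  shows "component H A u \<subseteq> component H (A \<inter> T) u"
proof
  fix w assume "w \<in> component H A u"
  then show "w \<in> component H (A \<inter> T) u"
  proof (induction rule: component_induct)
    case (step y z)
    moreover have "y \<in> T"
      using step.IH component_subset_insert[of H "A \<inter> T" u] assms(2) by blast
    ultimately show ?case using assms(1) by (auto intro: component_step)
  qed simp
qed

lemma component_restrict:
  assumes "A \<subseteq> B"
  shows "component H A u \<subseteq> component H (A \<inter> component H B u) u"
proof
  fix w assume "w \<in> component H A u"
  then show "w \<in> component H (A \<inter> component H B u) u"
  proof (induction rule: component_induct)
    case (step y z)
    have y: "y \<in> component H B u"
      using step.hyps(1) component_mono[OF assms] by blast
    then have "z \<in> component H B u"
      using step assms by (auto intro: component_step)
    with y step show ?case
      by (intro component_step[OF step.IH step.hyps(2)]) auto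
  qed simp
qed

lemma component_cong:
  "Restr H A = Restr H' A \<Longrightarrow> component H A u = component H' A u"
  by (simp add: component_def)

lemma walk_in_component:
  "is_walk E xs \<Longrightarrow> set xs \<subseteq> A \<Longrightarrow> last xs \<in> component E A (hd xs)"
proof (induction xs rule: rev_induct)
  case (snoc x xs)
  show ?case
  proof (cases "xs = []")
    case False
    then have "is_walk E xs" "(last xs, x) \<in> E"
      using is_walk_take[OF snoc.prems(1), of "length xs"] is_walk_nth[OF snoc.prems(1), of "length xs - 1"]
      by (auto simp: nth_append last_conv_nth)
    moreover have "last xs \<in> A" "x \<in> A"
      using snoc.prems(2) False by auto
    ultimately show ?thesis
      using snoc.IH snoc.prems(2) False by (simp add: component_step)
  qed simp
qed simp

section \<open>Balanced separators\<close>

definition balanced_separators :: "('a \<times> 'a) set \<Rightarrow> 'a set \<Rightarrow> nat \<Rightarrow> nat \<Rightarrow> bool" where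
  "balanced_separators H V s q \<longleftrightarrow>
    (\<forall>U W. U \<subseteq> V \<longrightarrow> W \<subseteq> U \<longrightarrow>
      (\<exists>X \<subseteq> U. card X \<le> s \<and> (\<forall>u \<in> U - X. q * card (W \<inter> component H (U - X) u) \<le> card W)))"

lemma balanced_separatorsD:
  assumes "balanced_separators H V s q" "U \<subseteq> V" "W \<subseteq> U"
  obtains X where "X \<subseteq> U" "card X \<le> s"
    "\<And>u. u \<in> U - X \<Longrightarrow> q * card (W \<inter> component H (U - X) u) \<le> card W"
proof -
  from assms(1)[unfolded balanced_separators_def, rule_format, OF assms(2,3)]
  obtain X where "X \<subseteq> U" "card X \<le> s" "\<forall>u \<in> U - X. q * card (W \<inter> component H (U - X) u) \<le> card W"
    by blast
  then show ?thesis using that by blast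
qed

lemma balanced_separators_trivial:
  assumes "finite V"
  shows "balanced_separators H V 0 1"
  unfolding balanced_separators_def
proof (intro allI impI exI[of _ "{}"] conjI ballI)
  fix U W u assume "U \<subseteq> V" "W \<subseteq> U"
  then have "finite W" using assms by (meson finite_subset)
  then show "1 * card (W \<inter> component H (U - {}) u) \<le> card W"
    by (simp add: card_mono)
qed auto

lemma card_heavy_disjoint_le:
  assumes "finite W" "finite C" "\<And>K L. K \<in> C \<Longrightarrow> L \<in> C \<Longrightarrow> K \<noteq> L \<Longrightarrow> K \<inter> L = {}"
    and heavy: "\<And>K. K \<in> C \<Longrightarrow> card W < m * card (W \<inter> K)"
  shows "card C \<le> m"
proof -
  have "(\<Sum>K\<in>C. card (W \<inter> K)) = card (\<Union>K\<in>C. W \<inter> K)"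
    using assms(1-3) by (intro card_UN_disjoint[symmetric]) auto
  also have "\<dots> \<le> card W"
    using assms(1) by (intro card_mono) auto
  finally have "(\<Sum>K\<in>C. m * card (W \<inter> K)) \<le> m * card W"
    by (simp add: sum_distrib_left[symmetric])
  moreover have "card C * (card W + 1) \<le> (\<Sum>K\<in>C. m * card (W \<inter> K))"
    using sum_bounded_below[of C "card W + 1" "\<lambda>K. m * card (W \<inter> K)"] heavy by fastforce
  ultimately have "card C * (card W + 1) \<le> m * (card W + 1)"
    by simp
  then show ?thesis by (subst (asm) mult_le_cancel2) simp
qed

lemma refined_component_card:
  assumes "finite W" "X0 \<subseteq> X" "Y \<subseteq> X" "u \<in> U - X"
    and "2 * card (W \<inter> component H (U - X0) u) \<le> card W"
    and "m * card (W \<inter> component H (U - X0) u \<inter> component H (component H (U - X0) u - Y) u)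
      \<le> card (W \<inter> component H (U - X0) u)"
  shows "2 * m * card (W \<inter> component H (U - X) u) \<le> card W"
proof -
  let ?K = "component H (U - X0) u"
  have "component H (U - X) u \<subseteq> component H ((U - X) \<inter> ?K) u"
    by (rule component_restrict) (use assms(2) in blast)
  also have "\<dots> \<subseteq> component H (?K - Y) u"
    using assms(3) by (intro component_mono) blast
  finally have "component H (U - X) u \<subseteq> ?K \<inter> component H (?K - Y) u"
    using component_mono[of "U - X" "U - X0" H u] assms(2) by blast
  then have "card (W \<inter> component H (U - X) u) \<le> card (W \<inter> ?K \<inter> component H (?K - Y) u)"
    using assms(1) by (intro card_mono) auto
  then have "2 * m * card (W \<inter> component H (U - X) u) \<le> 2 * (m * card (W \<inter> ?K \<inter> component H (?K - Y) u))"
    by simp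
  also have "\<dots> \<le> 2 * card (W \<inter> ?K)" using assms(6) by simp
  also have "\<dots> \<le> card W" using assms(5) .
  finally show ?thesis .
qed

lemma balanced_separators_family:
  assumes "balanced_separators H V t m" "finite C" "\<And>K. K \<in> C \<Longrightarrow> K \<subseteq> V"
  obtains Y where "\<forall>K\<in>C. Y K \<subseteq> K \<and> card (Y K) \<le> t \<and>
      (\<forall>u \<in> K - Y K. m * card ((W \<inter> K) \<inter> component H (K - Y K) u) \<le> card (W \<inter> K))"
    and "card (\<Union>K\<in>C. Y K) \<le> card C * t"
proof -
  have "\<exists>Y. Y \<subseteq> K \<and> card Y \<le> t \<and>
      (\<forall>u \<in> K - Y. m * card ((W \<inter> K) \<inter> component H (K - Y) u) \<le> card (W \<inter> K))"
    if "K \<in> C" for K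
    by (rule balanced_separatorsD[OF assms(1) assms(3)[OF that] Int_lower2]) blast
  then obtain Y where Y: "\<forall>K\<in>C. Y K \<subseteq> K \<and> card (Y K) \<le> t \<and>
      (\<forall>u \<in> K - Y K. m * card ((W \<inter> K) \<inter> component H (K - Y K) u) \<le> card (W \<inter> K))"
    using bchoice[of C] by (metis (no_types, lifting))
  have "card (\<Union>K\<in>C. Y K) \<le> (\<Sum>K\<in>C. card (Y K))" by (rule card_UN_le[OF assms(2)])
  also have "\<dots> \<le> card C * t" using sum_bounded_above[of C "\<lambda>K. card (Y K)" t] Y by simp
  finally show ?thesis using Y that by blast
qed

text \<open>Halve W's share with X0; at most 2 m of the resulting components keep more than a
  1/(2 m) share, and each of those is refined by a separator of size t.\<close>
lemma balanced_separators_compose: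
  assumes "finite V" "sym H" "balanced_separators H V s 2" "balanced_separators H V t m"
  shows "balanced_separators H V (s + 2 * m * t) (2 * m)"
  unfolding balanced_separators_def
proof (intro allI impI)
  fix U W assume U: "U \<subseteq> V" and W: "W \<subseteq> U"
  have fin: "finite U" "finite W" using U W assms(1) by (auto dest: finite_subset)
  obtain X0 where X0: "X0 \<subseteq> U" "card X0 \<le> s"
    "\<And>u. u \<in> U - X0 \<Longrightarrow> 2 * card (W \<inter> component H (U - X0) u) \<le> card W"
    using balanced_separatorsD[OF assms(3) U W] by blast
  let ?K = "component H (U - X0)"
  define C where "C = {?K u | u. u \<in> U - X0 \<and> card W < 2 * m * card (W \<inter> ?K u)}"
  have C_sub: "K \<subseteq> U - X0" if "K \<in> C" for K
    using that component_subset[of _ "U - X0" H] unfolding C_def by blast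
  then have "finite C" using fin(1) by (intro finite_subset[of C "Pow U"]) auto
  then have card_C: "card C \<le> 2 * m"
    using fin(2) component_disjoint[OF assms(2)] by (intro card_heavy_disjoint_le) (auto simp: C_def)
  obtain Y where Y: "\<forall>K\<in>C. Y K \<subseteq> K \<and> card (Y K) \<le> t \<and>
      (\<forall>u \<in> K - Y K. m * card ((W \<inter> K) \<inter> component H (K - Y K) u) \<le> card (W \<inter> K))"
    and card_Y: "card (\<Union>K\<in>C. Y K) \<le> card C * t"
    using balanced_separators_family[OF assms(4) \<open>finite C\<close>] C_sub U by blast
  define X where "X = X0 \<union> (\<Union>K\<in>C. Y K)"
  have card_X: "card X \<le> s + 2 * m * t"
    using card_Un_le[of X0 "\<Union>K\<in>C. Y K"] X0(2) card_Y mult_le_mono1[OF card_C, of t]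
    unfolding X_def by linarith
  have "2 * m * card (W \<inter> component H (U - X) u) \<le> card W" if u: "u \<in> U - X" for u
  proof -
    have u0: "u \<in> U - X0" using u by (auto simp: X_def)
    have sub: "component H (U - X) u \<subseteq> ?K u"
      by (rule component_mono) (auto simp: X_def)
    show ?thesis
    proof (cases "?K u \<in> C")
      case False
      then have "2 * m * card (W \<inter> ?K u) \<le> card W" using u0 by (auto simp: C_def)
      moreover have "card (W \<inter> component H (U - X) u) \<le> card (W \<inter> ?K u)"
        using sub fin(2) by (intro card_mono) auto
      ultimately show ?thesis by (meson le_trans mult_le_mono2)
    next
      case True
      have "u \<in> ?K u - Y (?K u)" using u True by (auto simp: X_def)
      with Y True have "m * card (W \<inter> ?K u \<inter> component H (?K u - Y (?K u)) u) \<le> card (W \<inter> ?K u)"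
        by simp
      with fin(2) _ _ u X0(3)[OF u0] show ?thesis
        by (rule refined_component_card) (use True in \<open>auto simp: X_def\<close>)
    qed
  qed
  moreover have "X \<subseteq> U" using X0(1) Y C_sub by (fastforce simp: X_def)
  ultimately show "\<exists>X \<subseteq> U. card X \<le> s + 2 * m * t \<and>
      (\<forall>u \<in> U - X. 2 * m * card (W \<inter> component H (U - X) u) \<le> card W)"
    using card_X by blast
qed

text \<open>Round q + 1 of composing halving separators refines at most 2^(q+1) heavy components.\<close>
fun halving_separator_bound :: "nat \<Rightarrow> nat \<Rightarrow> nat" where
  "halving_separator_bound s 0 = 0"
| "halving_separator_bound s (Suc q) = s + 2 ^ Suc q * halving_separator_bound s q"

lemma balanced_separators_power:
  assumes "finite V" "sym H" "balanced_separators H V s 2"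
  shows "balanced_separators H V (halving_separator_bound s q) (2 ^ q)"
proof (induction q)
  case 0
  show ?case using balanced_separators_trivial[OF assms(1)] by simp
next
  case (Suc q)
  show ?case
    using balanced_separators_compose[OF assms Suc.IH] by (simp add: mult.assoc)
qed

section \<open>Clustered 2-colourings\<close>

definition mono_edges :: "('a \<times> 'a) set \<Rightarrow> ('a \<Rightarrow> bool) \<Rightarrow> ('a \<times> 'a) set" where
  "mono_edges H c = {(x, y) \<in> H. c x = c y}"

lemma card_Image_le:
  assumes "finite A" "\<And>x. x \<in> A \<Longrightarrow> finite (H `` {x})" "\<And>x. x \<in> A \<Longrightarrow> card (H `` {x}) \<le> D"
  shows "card (H `` A) \<le> D * card A"
proof -
  have "card (H `` A) = card (\<Union>x\<in>A. H `` {x})" by (metis Image_eq_UN)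
  also have "\<dots> \<le> (\<Sum>x\<in>A. card (H `` {x}))" by (rule card_UN_le[OF assms(1)])
  also have "\<dots> \<le> card A * D" using sum_bounded_above[of A "\<lambda>x. card (H `` {x})" D] assms(3) by simp
  finally show ?thesis by (simp add: mult.commute)
qed

lemma separator_boundary_card:
  assumes "finite V" "H \<subseteq> V \<times> V" "sym H" "\<And>x. card (H `` {x}) \<le> D"
    and "U \<subseteq> V" "S \<subseteq> U" "X \<subseteq> U" "card X \<le> s" "card S \<le> a"
    and sep: "\<And>u. u \<in> U - X \<Longrightarrow> Q * card (S \<inter> component H (U - X) u) \<le> card S"
    and "2 * D \<le> Q" "2 * D * s \<le> a" and v: "v \<in> U - (S \<union> X)"
  shows "card (component H (U - (S \<union> X)) v \<inter> H `` (S \<union> X)) \<le> a"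
proof -
  let ?K = "component H (U - X) v"
  have "component H (U - (S \<union> X)) v \<inter> H `` (S \<union> X) \<subseteq> H `` (X \<union> (S \<inter> ?K))"
  proof
    fix w assume w: "w \<in> component H (U - (S \<union> X)) v \<inter> H `` (S \<union> X)"
    then obtain r where r: "r \<in> S \<union> X" "(r, w) \<in> H" by blast
    have "w \<in> ?K" "w \<in> U - (S \<union> X)"
      using w component_mono[of "U - (S \<union> X)" "U - X" H v] component_subset[of v "U - (S \<union> X)" H] v
      by auto
    moreover have "(w, r) \<in> H" using r(2) assms(3) by (auto dest: symD)
    ultimately have "r \<in> X \<or> r \<in> S \<inter> ?K"
      using r(1) assms(6) by (auto intro: component_step)
    then show "w \<in> H `` (X \<union> (S \<inter> ?K))" using r(2) by blast
  qed
  moreover have fin_Image: "finite (H `` A)" for A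
    using assms(2) by (intro finite_subset[OF _ assms(1)]) blast
  ultimately have "card (component H (U - (S \<union> X)) v \<inter> H `` (S \<union> X)) \<le> card (H `` (X \<union> (S \<inter> ?K)))"
    by (intro card_mono)
  also have "\<dots> \<le> D * card (X \<union> (S \<inter> ?K))"
    using assms(1,4,5,6,7) fin_Image by (intro card_Image_le) (auto dest: finite_subset)
  also have "\<dots> \<le> D * (s + card (S \<inter> ?K))"
    using card_Un_le[of X "S \<inter> ?K"] assms(8) by (intro mult_le_mono2) linarith
  also have "\<dots> \<le> a"
  proof -
    have "Q * card (S \<inter> ?K) \<le> a" using sep[of v] v assms(9) by auto
    then have "2 * D * card (S \<inter> ?K) \<le> a"
      using assms(11) by (meson le_trans mult_le_mono1)
    then show ?thesis using assms(12) by (simp add: add_mult_distrib2)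
  qed
  finally show ?thesis .
qed

lemma sym_mono_edges: "sym H \<Longrightarrow> sym (mono_edges H c)"
  unfolding mono_edges_def sym_def by auto

lemma mono_component_subset:
  assumes "sym H" "R \<subseteq> U" "\<forall>w\<in>R. c w = b" "\<forall>w\<in>(U - R) \<inter> H `` R. c w = (\<not> b)"
  shows "v \<in> R \<Longrightarrow> component (mono_edges H c) U v \<subseteq> R"
    and "v \<in> U - R \<Longrightarrow>
      component (mono_edges H c) U v \<subseteq> component (mono_edges H c) (component H (U - R) v) v"
proof -
  assume v: "v \<in> R"
  have "component (mono_edges H c) U v \<subseteq> component (mono_edges H c) (U \<inter> R) v"
    using assms(3,4) v by (intro component_confined) (auto simp: mono_edges_def)
  also have "\<dots> \<subseteq> R" using v assms(2) by (intro order_trans[OF component_subset]) auto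
  finally show "component (mono_edges H c) U v \<subseteq> R" .
next
  assume v: "v \<in> U - R"
  let ?K = "component H (U - R) v"
  have K: "?K \<subseteq> U - R" using v by (rule component_subset)
  have "y \<in> ?K" if "(x, y) \<in> mono_edges H c" "x \<in> ?K" "y \<in> U" for x y
  proof -
    have "(y, x) \<in> H" "(x, y) \<in> H" "c x = c y"
      using that(1) assms(1) by (auto simp: mono_edges_def dest: symD)
    then have "y \<notin> R" using assms(3,4) K that(2) by fastforce
    then show ?thesis using that K \<open>(x, y) \<in> H\<close> by (auto intro: component_step)
  qed
  then have "component (mono_edges H c) U v \<subseteq> component (mono_edges H c) (U \<inter> ?K) v"
    by (intro component_confined) auto
  also have "U \<inter> ?K = ?K" using K by blast
  finally show "component (mono_edges H c) U v \<subseteq> component (mono_edges H c) ?K v" .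
qed

lemma combine_colourings:
  assumes "finite U" "sym H" "R \<subseteq> U" "card R \<le> m"
    and parts: "\<And>v. v \<in> U - R \<Longrightarrow> \<exists>c.
      (\<forall>w \<in> component H (U - R) v \<inter> H `` R. c w = (\<not> b)) \<and>
      (\<forall>w \<in> component H (U - R) v. card (component (mono_edges H c) (component H (U - R) v) w) \<le> m)"
  shows "\<exists>c. (\<forall>w\<in>R. c w = b) \<and> (\<forall>v\<in>U. card (component (mono_edges H c) U v) \<le> m)"
proof -
  let ?K = "component H (U - R)"
  have "\<forall>K \<in> ?K ` (U - R). \<exists>c. (\<forall>w \<in> K \<inter> H `` R. c w = (\<not> b)) \<and>
      (\<forall>w \<in> K. card (component (mono_edges H c) K w) \<le> m)"
    using parts by blast
  then obtain g where g: "\<forall>K \<in> ?K ` (U - R). (\<forall>w \<in> K \<inter> H `` R. g K w = (\<not> b)) \<and>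
      (\<forall>w \<in> K. card (component (mono_edges H (g K)) K w) \<le> m)"
    by (metis (no_types, lifting) bchoice)
  define c where "c w = (if w \<in> R then b else g (?K w) w)" for w
  have K_sub: "?K v \<subseteq> U - R" if "v \<in> U - R" for v
    using that by (rule component_subset)
  have c_K: "c w = g (?K v) w" if "v \<in> U - R" "w \<in> ?K v" for v w
    using that K_sub component_eq[OF assms(2) that(2)] by (auto simp: c_def)
  have c_R: "\<forall>w\<in>R. c w = b" by (simp add: c_def)
  have c_bd: "\<forall>w\<in>(U - R) \<inter> H `` R. c w = (\<not> b)"
    using g c_K by fastforce
  have "card (component (mono_edges H c) U v) \<le> m" if v: "v \<in> U" for v
  proof (cases "v \<in> R")
    case True
    then have "component (mono_edges H c) U v \<subseteq> R"
      using mono_component_subset(1)[OF assms(2,3) c_R] c_bd by blast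
    then show ?thesis
      using assms(1,3,4) by (meson card_mono finite_subset le_trans)
  next
    case False
    with v have vK: "v \<in> U - R" by blast
    have "component (mono_edges H c) (?K v) v = component (mono_edges H (g (?K v))) (?K v) v"
      using c_K[OF vK] by (intro component_cong) (auto simp: mono_edges_def)
    moreover have "component (mono_edges H c) U v \<subseteq> component (mono_edges H c) (?K v) v"
      using mono_component_subset(2)[OF assms(2,3) c_R] c_bd vK by blast
    moreover have "finite (component (mono_edges H c) (?K v) v)"
      using component_subset[of v "?K v"] K_sub[OF vK] assms(1) by (meson component_refl finite_subset le_trans Diff_subset)
    ultimately show ?thesis
      using g vK by (metis (no_types, lifting) card_mono component_refl image_eqI le_trans)
  qed
  with c_R show ?thesis by blast
qed

text \<open>Induction on U: colour S' \<union> X with b, where S' \<supseteq> S is nonempty and X splits S'.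
  A component of the rest only has boundary vertices next to X or next to the part of S' in one
  component of U - X, hence at most a of them, and is coloured recursively with its boundary
  precoloured \<not> b.\<close>
lemma clustered_colouring:
  assumes "finite V" "H \<subseteq> V \<times> V" "sym H" "\<And>x. card (H `` {x}) \<le> D"
    and "balanced_separators H V s Q" "2 * D \<le> Q" "2 * D * s \<le> a" "1 \<le> a"
    and "U \<subseteq> V" "S \<subseteq> U" "card S \<le> a"
  shows "\<exists>c. (\<forall>v\<in>S. c v = b) \<and> (\<forall>v\<in>U. card (component (mono_edges H c) U v) \<le> a + s)"
  using assms(9-11)
proof (induction "card U" arbitrary: U S b rule: less_induct)
  case less
  have fin_U: "finite U" using less.prems(1) assms(1) by (rule finite_subset)
  show ?case
  proof (cases "U = {}")
    case False
    obtain S' where S': "S \<subseteq> S'" "S' \<subseteq> U" "card S' \<le> a" "S' \<noteq> {}"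
    proof (cases "S = {}")
      case True
      obtain u where "u \<in> U" using False by blast
      then show ?thesis using that[of "{u}"] True assms(8) by auto
    qed (use that less.prems in auto)
    obtain X where X: "X \<subseteq> U" "card X \<le> s"
      "\<And>u. u \<in> U - X \<Longrightarrow> Q * card (S' \<inter> component H (U - X) u) \<le> card S'"
      using balanced_separatorsD[OF assms(5) less.prems(1) S'(2)] by blast
    let ?R = "S' \<union> X"
    have "\<exists>c. (\<forall>w\<in>?R. c w = b) \<and> (\<forall>v\<in>U. card (component (mono_edges H c) U v) \<le> a + s)"
    proof (rule combine_colourings[OF fin_U assms(3)])
      show "?R \<subseteq> U" using S'(2) X(1) by blast
      show "card ?R \<le> a + s" using card_Un_le[of S' X] S'(3) X(2) by linarith
    next
      fix v assume v: "v \<in> U - ?R"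
      let ?K = "component H (U - ?R) v"
      have K: "?K \<subseteq> U - ?R" using v by (rule component_subset)
      then have "card ?K < card U" using S'(2,4) fin_U by (intro psubset_card_mono) auto
      moreover have "?K \<subseteq> V" using K less.prems(1) by blast
      moreover have "card (?K \<inter> H `` ?R) \<le> a"
        using assms(1-4) less.prems(1) S'(2) X(1,2) S'(3) X(3) assms(6,7) v
        by (rule separator_boundary_card)
      ultimately show "\<exists>c. (\<forall>w \<in> ?K \<inter> H `` ?R. c w = (\<not> b)) \<and>
          (\<forall>w \<in> ?K. card (component (mono_edges H c) ?K w) \<le> a + s)"
        by (rule less.hyps[OF _ _ Int_lower1])
    qed
    then show ?thesis using S'(1) by blast
  qed (intro exI[of _ "\<lambda>_. b"], simp)
qed

section \<open>Rooted trees and centroid bags\<close>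

lemma walk_avoiding_closed:
  assumes "\<forall>x y. (x, y) \<in> F \<and> x \<in> A \<and> y \<noteq> n \<longrightarrow> y \<in> A"
  shows "is_walk F xs \<Longrightarrow> hd xs \<in> A \<Longrightarrow> n \<notin> set xs \<Longrightarrow> set xs \<subseteq> A"
proof (induction xs rule: induct_list012)
  case (3 x y zs)
  then have "y \<in> A" using assms by auto
  with 3 show ?case by simp
qed auto

locale rooted_tree =
  fixes N :: "'n set" and F :: "('n \<times> 'n) set" and root :: 'n
  assumes tree: "is_tree N F" and root_in: "root \<in> N"
begin

lemma edges_subset: "F \<subseteq> N \<times> N" and sym_edges: "sym F" and finite_nodes: "finite N"
  and irrefl_edges: "(x, x) \<notin> F"
  using tree by (auto simp: is_tree_def fin_graph_def)

definition depth :: "'n \<Rightarrow> nat" where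
  "depth x = (LEAST k. \<exists>xs. is_walk F xs \<and> hd xs = root \<and> last xs = x \<and> length xs = Suc k)"

lemma depth_walk:
  assumes "x \<in> N"
  obtains xs where "is_walk F xs" "hd xs = root" "last xs = x" "length xs = Suc (depth x)"
proof -
  have "connected_in F N" using tree by (simp add: is_tree_def)
  then obtain xs where "is_walk F xs" "hd xs = root" "last xs = x"
    using root_in assms unfolding connected_in_def by blast
  then have "\<exists>k xs. is_walk F xs \<and> hd xs = root \<and> last xs = x \<and> length xs = Suc k"
    by (intro exI[of _ "length xs - 1"] exI[of _ xs]) (cases xs, auto)
  from LeastI_ex[OF this] show ?thesis
    using that unfolding depth_def by blast
qed

lemma depth_le: "is_walk F xs \<Longrightarrow> hd xs = root \<Longrightarrow> depth (last xs) \<le> length xs - 1"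
  unfolding depth_def by (rule Least_le) (cases xs, auto)

lemma depth_root: "depth root = 0"
  using depth_le[of "[root]"] by simp

lemma depth_eq_0: "x \<in> N \<Longrightarrow> depth x = 0 \<Longrightarrow> x = root"
  by (metis depth_walk length_0_conv length_Suc_conv list.sel(1) last_ConsL)

lemma depth_edge_le: "(x, y) \<in> F \<Longrightarrow> depth y \<le> depth x + 1"
proof -
  assume xy: "(x, y) \<in> F"
  then have "x \<in> N" using edges_subset by blast
  then obtain xs where xs: "is_walk F xs" "hd xs = root" "last xs = x" "length xs = Suc (depth x)"
    by (rule depth_walk)
  then have "is_walk F (xs @ [y])" "hd (xs @ [y]) = root"
    using is_walk_append[of F xs "[y]"] xy by (auto simp: hd_append)
  from depth_le[OF this] xs(4) show ?thesis by simp
qed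

lemma ex_parent:
  assumes "x \<in> N" "x \<noteq> root"
  shows "\<exists>z. (x, z) \<in> F \<and> depth z + 1 = depth x"
proof -
  obtain xs where xs: "is_walk F xs" "hd xs = root" "last xs = x" "length xs = Suc (depth x)"
    using assms(1) by (rule depth_walk)
  have pos: "depth x > 0" using depth_eq_0 assms by blast
  let ?z = "xs ! (depth x - 1)"
  have "xs ! depth x = x"
    using xs(3,4) last_conv_nth[of xs] by (metis diff_Suc_1 list.size(3) nat.distinct(1))
  then have "(?z, x) \<in> F"
    using is_walk_nth[OF xs(1), of "depth x - 1"] pos xs(4) by simp
  moreover have "depth ?z \<le> depth x - 1"
  proof -
    have "take (depth x) xs \<noteq> []" "length (take (depth x) xs) = depth x"
      using pos xs(4) by auto
    then have "last (take (depth x) xs) = ?z" "hd (take (depth x) xs) = root"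
      using pos xs(2) by (auto simp: last_conv_nth hd_conv_nth)
    then show ?thesis
      using depth_le[of "take (depth x) xs"] is_walk_take[OF xs(1)] pos xs(4) by simp
  qed
  ultimately show ?thesis
    using depth_edge_le[of ?z x] sym_edges pos by (intro exI[of _ ?z]) (auto dest: symD)
qed

definition parent :: "'n \<Rightarrow> 'n" where
  "parent x = (if x = root then root else SOME z. (x, z) \<in> F \<and> depth z + 1 = depth x)"

lemma parent_root [simp]: "parent root = root"
  by (simp add: parent_def)

lemma parent_edge: "x \<in> N \<Longrightarrow> x \<noteq> root \<Longrightarrow> (x, parent x) \<in> F \<and> depth (parent x) + 1 = depth x"
  unfolding parent_def using someI_ex[OF ex_parent] by simp

lemma parent_in: "x \<in> N \<Longrightarrow> parent x \<in> N"
  using parent_edge edges_subset by (cases "x = root") auto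

lemma walk_to_root:
  "x \<in> N \<Longrightarrow> \<exists>xs. is_walk {(u, parent u) | u. u \<in> N \<and> u \<noteq> root} xs \<and> hd xs = x \<and> last xs = root"
proof (induction "depth x" arbitrary: x)
  case 0
  then show ?case using depth_eq_0 by (intro exI[of _ "[root]"]) auto
next
  case (Suc n)
  then have "x \<noteq> root" using depth_root by auto
  with Suc.prems have "parent x \<in> N" "depth (parent x) = n"
    using parent_in[OF Suc.prems] parent_edge[OF Suc.prems] Suc.hyps(2) by auto
  then obtain xs where xs: "is_walk {(u, parent u) | u. u \<in> N \<and> u \<noteq> root} xs"
    "hd xs = parent x" "last xs = root"
    using Suc.hyps(1) by blast
  then have "xs \<noteq> []" by auto
  with xs \<open>x \<noteq> root\<close> Suc.prems show ?case
    by (intro exI[of _ "x # xs"]) (cases xs, auto)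
qed

text \<open>Otherwise the walks from x and from y up to the root avoid the edge {x, y}, which would
  then lie on a cycle.\<close>
lemma edge_imp_parent:
  assumes xy: "(x, y) \<in> F" and "depth y \<le> depth x"
  shows "y = parent x"
proof (rule ccontr)
  assume ne: "y \<noteq> parent x"
  let ?P = "{(u, parent u) | u. u \<in> N \<and> u \<noteq> root}"
  have P: "?P \<union> ?P\<inverse> \<subseteq> F - {(x, y), (y, x)}"
    using parent_edge sym_edges ne assms(2) by (fastforce dest: symD)
  have "x \<in> N" "y \<in> N" using xy edges_subset by auto
  then obtain xs ys where xs: "is_walk ?P xs" "hd xs = x" "last xs = root"
    and ys: "is_walk ?P ys" "hd ys = y" "last ys = root"
    using walk_to_root by meson
  have "is_walk (?P \<union> ?P\<inverse>) xs" "is_walk (?P \<union> ?P\<inverse>) (rev ys)"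
    using xs(1) is_walk_rev[OF _ is_walk_mono[OF ys(1)]] by (auto intro: is_walk_mono simp: sym_def)
  moreover have "ys \<noteq> []" using ys by auto
  ultimately obtain zs where zs: "is_walk (?P \<union> ?P\<inverse>) zs" "hd zs = x" "last zs = y"
    using walk_concat[of "?P \<union> ?P\<inverse>" xs "rev ys"] xs ys by (auto simp: hd_rev last_rev)
  have "is_walk (F - {(x, y), (y, x)}) zs" using is_walk_mono[OF zs(1) P] .
  then show False using tree xy zs(2,3) unfolding is_tree_def by blast
qed

lemma edge_parent_cases:
  assumes "(x, y) \<in> F"
  shows "(x \<noteq> root \<and> y = parent x) \<or> (y \<noteq> root \<and> x = parent y)"
proof -
  have "a \<noteq> root" if "(a, b) \<in> F" "depth b \<le> depth a" for a b
    using that depth_root depth_eq_0 edges_subset irrefl_edges by fastforce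
  moreover have "(y, x) \<in> F" using assms sym_edges by (auto dest: symD)
  ultimately show ?thesis
    using edge_imp_parent assms by (metis nat_le_linear)
qed

lemma parent_iterate_root: "x \<in> N \<Longrightarrow> (parent ^^ depth x) x = root"
proof (induction "depth x" arbitrary: x)
  case (Suc n)
  then have "x \<noteq> root" using depth_root by auto
  with Suc show ?case
    using parent_in[of x] parent_edge[of x] by (metis Suc_eq_plus1 funpow_simps_right(2) nat.inject o_apply)
qed (use depth_eq_0 in simp)

definition descendants :: "'n \<Rightarrow> 'n set" where
  "descendants m = {x \<in> N. \<exists>k. (parent ^^ k) x = m}"

lemma descendants_root: "descendants root = N"
  using parent_iterate_root by (auto simp: descendants_def)

lemma descendants_child_closed:
  assumes "parent c = n" "c \<noteq> root" "(x, y) \<in> F" "x \<in> descendants c" "y \<noteq> n"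
  shows "y \<in> descendants c"
proof -
  obtain k where k: "(parent ^^ k) x = c" using assms(4) by (auto simp: descendants_def)
  have "y \<in> N" using assms(3) edges_subset by auto
  from edge_parent_cases[OF assms(3)] show ?thesis
  proof
    assume "x \<noteq> root \<and> y = parent x"
    moreover have "k \<noteq> 0" using k assms(1,5) calculation by (cases k) auto
    ultimately have "(parent ^^ (k - 1)) y = c"
      using k by (metis Suc_pred' bot_nat_0.not_eq_extremum funpow_simps_right(2) o_apply)
    with \<open>y \<in> N\<close> show ?thesis unfolding descendants_def by blast
  next
    assume "y \<noteq> root \<and> x = parent y"
    then have "(parent ^^ Suc k) y = c" using k by (simp add: funpow_Suc_right del: funpow.simps)
    with \<open>y \<in> N\<close> show ?thesis unfolding descendants_def by blast
  qed
qed

lemma non_descendants_closed: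
  assumes "(x, y) \<in> F" "x \<in> N - descendants n" "y \<noteq> n"
  shows "y \<in> N - descendants n"
proof -
  have "y \<in> N" using assms(1) edges_subset by auto
  moreover have "y \<notin> descendants n"
  proof
    assume "y \<in> descendants n"
    then obtain k where k: "(parent ^^ k) y = n" by (auto simp: descendants_def)
    from edge_parent_cases[OF assms(1)] show False
    proof
      assume "x \<noteq> root \<and> y = parent x"
      then have "(parent ^^ Suc k) x = n" using k by (simp add: funpow_Suc_right del: funpow.simps)
      then show False using assms(2) unfolding descendants_def by blast
    next
      assume "y \<noteq> root \<and> x = parent y"
      moreover have "k \<noteq> 0" using k assms(3) by (cases k) auto
      ultimately have "(parent ^^ (k - 1)) x = n"
        using k by (metis Suc_pred' bot_nat_0.not_eq_extremum funpow_simps_right(2) o_apply)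
      then show False using assms(2) unfolding descendants_def by blast
    qed
  qed
  ultimately show ?thesis by blast
qed

lemma descendant_of_child:
  assumes "x \<in> descendants n" "x \<noteq> n"
  obtains c where "c \<in> N" "c \<noteq> root" "parent c = n" "x \<in> descendants c"
proof -
  have x: "x \<in> N" using assms(1) by (simp add: descendants_def)
  have "\<exists>k. (parent ^^ k) x = n" using assms(1) by (simp add: descendants_def)
  then obtain k where k: "(parent ^^ k) x = n" and min: "\<And>j. j < k \<Longrightarrow> (parent ^^ j) x \<noteq> n"
    using exists_least_iff[of "\<lambda>k. (parent ^^ k) x = n"] by blast
  obtain j where j: "k = Suc j" using k assms(2) by (cases k) auto
  let ?c = "(parent ^^ j) x"
  have "?c \<in> N" using x by (induction j) (auto simp: parent_in)
  moreover have "parent ?c = n" "?c \<noteq> n" using k j min[of j] by auto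
  moreover have "x \<in> descendants ?c" using x by (auto simp: descendants_def)
  ultimately show ?thesis using that parent_root by metis
qed

end

locale rooted_tree_decomposition = rooted_tree N F root
  for N :: "nat set" and F root +
  fixes V :: "'a set" and E B
  assumes decomposition: "tree_decomposition V E N F B"
begin

lemma bag_subset: "n \<in> N \<Longrightarrow> B n \<subseteq> V"
  and vertex_in_bag: "v \<in> V \<Longrightarrow> \<exists>n\<in>N. v \<in> B n"
  and edge_in_bag: "(u, v) \<in> E \<Longrightarrow> \<exists>n\<in>N. u \<in> B n \<and> v \<in> B n"
  and bags_connected: "v \<in> V \<Longrightarrow> connected_in F {n \<in> N. v \<in> B n}"
  using decomposition by (auto simp: tree_decomposition_def)

lemma bags_of_vertex_closed:
  assumes closed: "\<forall>x y. (x, y) \<in> F \<and> x \<in> A \<and> y \<noteq> n \<longrightarrow> y \<in> A"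
    and "v \<in> V - B n" "x \<in> A" "x \<in> N" "v \<in> B x"
  shows "{y \<in> N. v \<in> B y} \<subseteq> A"
proof
  fix y assume y: "y \<in> {y \<in> N. v \<in> B y}"
  obtain xs where xs: "is_walk F xs" "set xs \<subseteq> {y \<in> N. v \<in> B y}" "hd xs = x" "last xs = y"
    using bags_connected assms(2,4,5) y unfolding connected_in_def by blast
  then have "n \<notin> set xs" using assms(2) by blast
  then have "set xs \<subseteq> A"
    using walk_avoiding_closed[OF closed xs(1)] xs(3) assms(3) by blast
  moreover have "xs \<noteq> []" using xs(1) by auto
  ultimately show "y \<in> A" using xs(4) last_in_set by blast
qed

lemma bags_of_component_closed:
  assumes closed: "\<forall>x y. (x, y) \<in> F \<and> x \<in> A \<and> y \<noteq> n \<longrightarrow> y \<in> A"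
    and "{y \<in> N. u \<in> B y} \<subseteq> A" "w \<in> component E (V - B n) u"
  shows "{y \<in> N. w \<in> B y} \<subseteq> A"
  using assms(3)
proof (induction rule: component_induct)
  case (step y z)
  obtain x where x: "x \<in> N" "y \<in> B x" "z \<in> B x" using edge_in_bag[OF step.hyps(2)] by blast
  then have "x \<in> A" using step.IH by blast
  from bags_of_vertex_closed[OF closed step.hyps(4) this x(1,3)] show ?case .
qed (rule assms(2))

lemma component_within_child:
  assumes "u \<in> V - B n" "x \<in> descendants n" "u \<in> B x"
  obtains c where "c \<in> N" "c \<noteq> root" "parent c = n"
    "component E (V - B n) u \<subseteq> \<Union>(B ` descendants c)"
proof -
  have "x \<noteq> n" "x \<in> N" using assms by (auto simp: descendants_def)
  with assms(2) obtain c where c: "c \<in> N" "c \<noteq> root" "parent c = n" "x \<in> descendants c"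
    by (metis descendant_of_child)
  have closed: "\<forall>x y. (x, y) \<in> F \<and> x \<in> descendants c \<and> y \<noteq> n \<longrightarrow> y \<in> descendants c"
    using descendants_child_closed[OF c(3,2)] by blast
  have "{y \<in> N. u \<in> B y} \<subseteq> descendants c"
    by (rule bags_of_vertex_closed[OF closed assms(1) c(4) \<open>x \<in> N\<close> assms(3)])
  note bags = bags_of_component_closed[OF closed this]
  have "component E (V - B n) u \<subseteq> \<Union>(B ` descendants c)"
  proof
    fix w assume w: "w \<in> component E (V - B n) u"
    then have "w \<in> V" using component_subset[OF assms(1)] by blast
    then obtain y where "y \<in> N" "w \<in> B y" using vertex_in_bag by blast
    then show "w \<in> \<Union>(B ` descendants c)" using bags[OF w] by blast
  qed
  with c(1-3) show ?thesis by (rule that)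
qed

lemma component_outside_subtree:
  assumes "u \<in> V - B n" "x \<in> N - descendants n" "u \<in> B x"
  shows "component E (V - B n) u \<inter> \<Union>(B ` descendants n) = {}"
proof -
  have closed: "\<forall>x y. (x, y) \<in> F \<and> x \<in> N - descendants n \<and> y \<noteq> n \<longrightarrow> y \<in> N - descendants n"
    using non_descendants_closed by blast
  have "x \<in> N" using assms(2) by blast
  have "{y \<in> N. u \<in> B y} \<subseteq> N - descendants n"
    by (rule bags_of_vertex_closed[OF closed assms(1,2) \<open>x \<in> N\<close> assms(3)])
  note bags = bags_of_component_closed[OF closed this]
  show ?thesis
  proof (rule ccontr)
    assume "component E (V - B n) u \<inter> \<Union>(B ` descendants n) \<noteq> {}"
    then obtain w y where "w \<in> component E (V - B n) u" "y \<in> descendants n" "w \<in> B y" by blast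
    then show False using bags by (auto simp: descendants_def)
  qed
qed

text \<open>Take n deepest such that the bags below n contain more than half of W: each component
  of G - B n lies in the bags below one child of n, or avoids all bags below n.\<close>
lemma balanced_bag:
  assumes "finite W" "W \<subseteq> V"
  shows "\<exists>n\<in>N. \<forall>u \<in> V - B n. 2 * card (W \<inter> component E (V - B n) u) \<le> card W"
proof (cases "W = {}")
  case False
  let ?Y = "\<lambda>m. \<Union>(B ` descendants m)"
  define heavy where "heavy m \<longleftrightarrow> m \<in> N \<and> card W < 2 * card (W \<inter> ?Y m)" for m
  have "W \<inter> ?Y root = W"
    using assms(2) vertex_in_bag by (auto simp: descendants_root)
  then have "heavy root" using root_in False assms(1) by (simp add: heavy_def card_gt_0_iff)
  moreover have "depth m < Suc (Max (depth ` N))" if "heavy m" for m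
    using that finite_nodes by (simp add: heavy_def le_imp_less_Suc)
  ultimately obtain n where n: "heavy n" and deepest: "\<And>m. heavy m \<Longrightarrow> depth m \<le> depth n"
    using ex_has_greatest_nat[of heavy root depth] by metis
  have "n \<in> N" using n by (simp add: heavy_def)
  moreover have "2 * card (W \<inter> component E (V - B n) u) \<le> card W" if u: "u \<in> V - B n" for u
  proof -
    obtain x where x: "x \<in> N" "u \<in> B x" using u vertex_in_bag by blast
    show ?thesis
    proof (cases "x \<in> descendants n")
      case True
      then obtain c where c: "c \<in> N" "c \<noteq> root" "parent c = n"
        and sub: "component E (V - B n) u \<subseteq> ?Y c"
        using component_within_child u x(2) by metis
      have "depth c = depth n + 1" using parent_edge[OF c(1,2)] c(3) by simp
      then have "\<not> heavy c" using deepest by fastforce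
      then have "2 * card (W \<inter> ?Y c) \<le> card W" using c(1) by (simp add: heavy_def)
      moreover have "card (W \<inter> component E (V - B n) u) \<le> card (W \<inter> ?Y c)"
        using sub assms(1) by (intro card_mono) auto
      ultimately show ?thesis by linarith
    next
      case False
      then have "W \<inter> component E (V - B n) u \<subseteq> W - (W \<inter> ?Y n)"
        using component_outside_subtree[OF u _ x(2)] x(1) by blast
      then have "card (W \<inter> component E (V - B n) u) \<le> card W - card (W \<inter> ?Y n)"
        using assms(1) by (metis card_Diff_subset card_mono finite_Diff finite_Int inf_le1)
      moreover have "card (W \<inter> ?Y n) \<le> card W" using assms(1) by (intro card_mono) auto
      ultimately show ?thesis using n unfolding heavy_def by linarith
    qed
  qed
  ultimately show ?thesis by blast
qed (use root_in in auto)

end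

section \<open>The distance-r graph\<close>

definition dist_graph :: "'a set \<Rightarrow> ('a \<times> 'a) set \<Rightarrow> real \<Rightarrow> ('a \<times> 'a) set" where
  "dist_graph V E r = {(x, y) \<in> V \<times> V. gdist E x y \<le> ereal r}"

lemma dist_graph_subset: "dist_graph V E r \<subseteq> V \<times> V"
  by (auto simp: dist_graph_def)

lemma sym_dist_graph: "sym E \<Longrightarrow> sym (dist_graph V E r)"
  by (auto simp: dist_graph_def sym_def intro: gdist_sym_le)

lemma dist_graph_refl: "x \<in> V \<Longrightarrow> 0 \<le> r \<Longrightarrow> (x, x) \<in> dist_graph V E r"
  by (simp add: dist_graph_def gdist_refl)

lemma card_walk_ball:
  assumes "E \<subseteq> V \<times> V" "finite V" "\<And>v. card (E `` {v}) \<le> d"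
  shows "finite {y. \<exists>xs. is_walk E xs \<and> hd xs = x \<and> last xs = y \<and> length xs \<le> Suc n}
    \<and> card {y. \<exists>xs. is_walk E xs \<and> hd xs = x \<and> last xs = y \<and> length xs \<le> Suc n} \<le> (d + 1) ^ n"
proof (induction n)
  case 0
  have "{y. \<exists>xs. is_walk E xs \<and> hd xs = x \<and> last xs = y \<and> length xs \<le> Suc 0} = {x}"
    by (auto simp: le_Suc_eq length_Suc_conv intro!: exI[of _ "[x]"])
  then show ?case by simp
next
  case (Suc n)
  let ?B = "\<lambda>n. {y. \<exists>xs. is_walk E xs \<and> hd xs = x \<and> last xs = y \<and> length xs \<le> Suc n}"
  have "?B (Suc n) \<subseteq> ?B n \<union> E `` ?B n"
  proof
    fix y assume "y \<in> ?B (Suc n)"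
    then obtain xs where xs: "is_walk E xs" "hd xs = x" "last xs = y" "length xs \<le> Suc (Suc n)"
      by blast
    show "y \<in> ?B n \<union> E `` ?B n"
    proof (cases "length xs \<le> Suc n")
      case False
      then have len: "length xs = Suc (Suc n)" using xs(4) by simp
      let ?ys = "take (Suc n) xs"
      have "is_walk E ?ys" "hd ?ys = x" "length ?ys \<le> Suc n"
        using is_walk_take[OF xs(1)] xs(2) len by (auto simp: hd_conv_nth)
      moreover have "last ?ys = xs ! n" using len by (subst last_conv_nth) auto
      moreover have "xs ! Suc n = y" using xs(3) len by (subst (asm) last_conv_nth) auto
      then have "(xs ! n, y) \<in> E" using is_walk_nth[OF xs(1), of n] len by simp
      ultimately show ?thesis by blast
    qed (use xs in blast)
  qed
  moreover have "finite (E `` ?B n)" using assms(1,2) by (auto intro: finite_subset)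
  moreover have "card (E `` ?B n) \<le> d * card (?B n)"
    using Suc.IH assms(1,2,3) by (intro card_Image_le) (auto intro: finite_subset)
  ultimately have "finite (?B (Suc n))" "card (?B (Suc n)) \<le> card (?B n) + d * card (?B n)"
    using Suc.IH card_Un_le[of "?B n" "E `` ?B n"] card_mono[of "?B n \<union> E `` ?B n" "?B (Suc n)"]
    by (auto intro: finite_subset)
  moreover have "card (?B n) + d * card (?B n) \<le> (d + 1) ^ Suc n"
    using Suc.IH mult_le_mono2[of "card (?B n)" "(d + 1) ^ n" "d + 1"] by simp
  ultimately show ?case by simp
qed

lemma dist_graph_degree:
  assumes "E \<subseteq> V \<times> V" "finite V" "\<And>v. card (E `` {v}) \<le> d"
  shows "card (dist_graph V E r `` {x}) \<le> (d + 1) ^ nat \<lfloor>r\<rfloor>"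
proof -
  have "dist_graph V E r `` {x}
      \<subseteq> {y. \<exists>xs. is_walk E xs \<and> hd xs = x \<and> last xs = y \<and> length xs \<le> Suc (nat \<lfloor>r\<rfloor>)}"
  proof
    fix y assume "y \<in> dist_graph V E r `` {x}"
    then obtain xs where "is_walk E xs" "hd xs = x" "last xs = y" "real (length xs - 1) \<le> r"
      by (auto simp: dist_graph_def gdist_le_iff)
    moreover from this(4) have "length xs \<le> Suc (nat \<lfloor>r\<rfloor>)" by linarith
    ultimately show "y \<in> {y. \<exists>xs. is_walk E xs \<and> hd xs = x \<and> last xs = y \<and> length xs \<le> Suc (nat \<lfloor>r\<rfloor>)}"
      by blast
  qed
  then show ?thesis
    using card_walk_ball[OF assms, of x "nat \<lfloor>r\<rfloor>"] by (meson card_mono le_trans)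
qed

lemma dist_graph_component_subset:
  assumes "sym E" "E \<subseteq> V \<times> V" "U \<subseteq> V"
  shows "component (dist_graph V E r) (U - dist_graph V E r `` S) u \<subseteq> component E (V - S) u"
proof
  let ?H = "dist_graph V E r"
  fix w assume "w \<in> component ?H (U - ?H `` S) u"
  then show "w \<in> component E (V - S) u"
  proof (induction rule: component_induct)
    case (step y z)
    obtain xs where xs: "is_walk E xs" "hd xs = y" "last xs = z" "real (length xs - 1) \<le> r"
      using step.hyps(2) by (auto simp: dist_graph_def gdist_le_iff)
    have "set xs \<subseteq> V" using set_walk_subset[OF xs(1) assms(2)] xs(2) step.hyps(3) assms(3) by blast
    moreover have "x \<notin> S" if "x \<in> set xs" for x
    proof
      assume "x \<in> S"
      have "gdist E y x \<le> ereal r"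
        using gdist_walk_vertex_le[OF xs(1) that] xs(2,4) by (meson ereal_less_eq(3) order_trans)
      then have "(x, y) \<in> ?H"
        using that \<open>set xs \<subseteq> V\<close> step.hyps(3) assms(3) gdist_sym_le[OF assms(1)]
        by (auto simp: dist_graph_def)
      with \<open>x \<in> S\<close> step.hyps(3) show False by blast
    qed
    ultimately have "z \<in> component E (V - S) y"
      using walk_in_component[OF xs(1)] xs(2,3) by blast
    then show ?case using component_eq[OF assms(1) step.IH] component_eq[OF assms(1)] by blast
  qed simp
qed

lemma dist_graph_balanced_separators:
  assumes "fin_graph V E" "tree_decomposition V E N F B" "\<forall>n\<in>N. card (B n) \<le> k"
    and "\<And>v. card (E `` {v}) \<le> d" "0 \<le> r"
  shows "balanced_separators (dist_graph V E r) V (k * (d + 1) ^ nat \<lfloor>r\<rfloor>) 2"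
  unfolding balanced_separators_def
proof (intro allI impI)
  fix U W assume U: "U \<subseteq> V" and W: "W \<subseteq> U"
  let ?H = "dist_graph V E r" and ?D = "(d + 1) ^ nat \<lfloor>r\<rfloor>"
  have V: "finite V" "E \<subseteq> V \<times> V" "sym E" using assms(1) by (auto simp: fin_graph_def)
  have "is_tree N F" using assms(2) by (simp add: tree_decomposition_def)
  then obtain root where "root \<in> N" by (auto simp: is_tree_def)
  then interpret rooted_tree_decomposition N F root V E B
    using \<open>is_tree N F\<close> assms(2) by unfold_locales
  obtain n where n: "n \<in> N" "\<And>u. u \<in> V - B n \<Longrightarrow> 2 * card (W \<inter> component E (V - B n) u) \<le> card W"
    using balanced_bag[of W] U W V(1) by (meson finite_subset order_trans)
  define X where "X = U \<inter> ?H `` B n"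
  have fin_Image: "finite (?H `` A)" for A
    by (rule finite_subset[OF _ V(1)]) (use dist_graph_subset[of V E r] in blast)
  have "card X \<le> card (?H `` B n)"
    using fin_Image by (auto simp: X_def intro!: card_mono)
  also have "\<dots> \<le> ?D * card (B n)"
    using dist_graph_degree[OF V(2,1) assms(4)] bag_subset[OF n(1)] V(1) fin_Image
    by (intro card_Image_le) (auto intro: finite_subset)
  also have "\<dots> \<le> k * ?D" using assms(3) n(1) by simp
  finally have "card X \<le> k * ?D" .
  moreover have "2 * card (W \<inter> component ?H (U - X) u) \<le> card W" if u: "u \<in> U - X" for u
  proof -
    have "u \<in> V" using u U by blast
    then have "u \<in> V - B n" using u dist_graph_refl[OF _ assms(5), of u V E] by (auto simp: X_def)
    moreover have "component ?H (U - X) u \<subseteq> component E (V - B n) u"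
      using dist_graph_component_subset[OF V(3,2) U] by (simp add: X_def Diff_Int)
    then have "card (W \<inter> component ?H (U - X) u) \<le> card (W \<inter> component E (V - B n) u)"
      using U W V(1) by (intro card_mono) (auto intro: finite_subset)
    ultimately show ?thesis using n(2) by (meson le_trans mult_le_mono2)
  qed
  moreover have "X \<subseteq> U" by (simp add: X_def)
  ultimately show "\<exists>X \<subseteq> U. card X \<le> k * ?D \<and> (\<forall>u \<in> U - X. 2 * card (W \<inter> component ?H (U - X) u) \<le> card W)"
    by blast
qed

text \<open>D bounds the degree of the distance-r graph; iterating the separators D + 1 times makes the
  splitting ratio at least 2 D, as required by clustered_colouring.\<close>
definition cluster_bound :: "nat \<Rightarrow> nat \<Rightarrow> real \<Rightarrow> nat" where
  "cluster_bound k d r =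
    (let D = (d + 1) ^ nat \<lfloor>r\<rfloor>; s = halving_separator_bound (k * D) (Suc D) in max 1 (2 * D * s) + s)"

lemma cluster_bound_pos: "0 < cluster_bound k d r"
  unfolding cluster_bound_def Let_def by (simp only: add_gr_0 less_max_iff_disj) simp

lemma dist_graph_clustered:
  assumes "fin_graph V E" "tree_decomposition V E N F B" "\<forall>n\<in>N. card (B n) \<le> k"
    and "\<And>v. card (E `` {v}) \<le> d" "0 \<le> r"
  shows "\<exists>c. \<forall>v\<in>V. card (component (mono_edges (dist_graph V E r) c) V v) \<le> cluster_bound k d r"
proof -
  let ?H = "dist_graph V E r" and ?D = "(d + 1) ^ nat \<lfloor>r\<rfloor>"
  let ?s = "halving_separator_bound (k * ?D) (Suc ?D)"
  have V: "finite V" "E \<subseteq> V \<times> V" "sym E" using assms(1) by (auto simp: fin_graph_def)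
  have sep: "balanced_separators ?H V ?s (2 ^ Suc ?D)"
    by (rule balanced_separators_power[OF V(1) sym_dist_graph[OF V(3)] dist_graph_balanced_separators[OF assms]])
  have "2 * ?D \<le> 2 ^ Suc ?D" using less_exp[of ?D] by simp
  from clustered_colouring[OF V(1) dist_graph_subset sym_dist_graph[OF V(3)]
      dist_graph_degree[OF V(2,1) assms(4)] sep this _ _ order.refl empty_subsetI, of "max 1 (2 * ?D * ?s)"]
  have "\<exists>c. (\<forall>v\<in>{}. c v = True) \<and>
      (\<forall>v\<in>V. card (component (mono_edges ?H c) V v) \<le> max 1 (2 * ?D * ?s) + ?s)"
    by simp
  then show ?thesis by (simp add: cluster_bound_def Let_def)
qed

lemma mono_component_colour:
  "w \<in> component (mono_edges H c) U v \<Longrightarrow> c w = c v"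
  by (induction rule: component_induct) (auto simp: mono_edges_def)

lemma gdist_le_relpow:
  assumes "R \<subseteq> {(x, y). gdist E x y \<le> ereal r}" "0 \<le> r" "(x, y) \<in> R ^^ j"
  shows "gdist E x y \<le> ereal (real j * r)"
  using assms(3)
proof (induction j arbitrary: y)
  case 0
  then show ?case using gdist_refl[OF order.refl] by simp
next
  case (Suc j)
  then obtain z where z: "(x, z) \<in> R ^^ j" "(z, y) \<in> R" by auto
  have "gdist E x z \<le> ereal (real j * r)" using Suc.IH[OF z(1)] .
  moreover have "gdist E z y \<le> ereal r" using assms(1) z(2) by blast
  ultimately have "gdist E x y \<le> ereal (real j * r + r)" by (rule gdist_triangle_le)
  then show ?case by (simp add: algebra_simps)
qed

text \<open>Crude bound: a chain of edges inside the component needs at most as many steps as there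
  are edges among its at most m vertices.\<close>
lemma gdist_le_in_small_component:
  assumes "sym G" "G \<subseteq> {(x, y). gdist E x y \<le> ereal r}" "0 \<le> r"
    and "finite (component G A v)" "card (component G A v) \<le> m"
    and "x \<in> component G A v" "y \<in> component G A v"
  shows "gdist E x y \<le> ereal (real (m * m) * r)"
proof -
  let ?K = "component G A v"
  let ?R = "Restr G (A \<inter> ?K)"
  have "component G A x = ?K" by (rule component_eq[OF assms(1,6)])
  then have "?K \<subseteq> component G (A \<inter> ?K) x"
    using component_restrict[of A A G x] by simp
  with assms(7) have "y \<in> component G (A \<inter> ?K) x" by (rule subsetD[rotated])
  then have "(x, y) \<in> ?R\<^sup>*" unfolding component_def[of G "A \<inter> ?K" x] by (rule CollectD)
  then obtain j where j: "(x, y) \<in> ?R ^^ j" using rtrancl_imp_relpow by blast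
  have R_sub: "?R \<subseteq> ?K \<times> ?K" by blast
  then have fin: "finite ?R" using assms(4) finite_subset by blast
  obtain i where i: "(x, y) \<in> ?R ^^ i" "i \<le> card ?R"
    using relpow_finite_bounded[OF fin, of j] j by blast
  have "card ?R \<le> card (?K \<times> ?K)"
    using R_sub assms(4) by (intro card_mono) simp_all
  also have "\<dots> \<le> m * m" using assms(5) by (simp add: card_cartesian_product mult_le_mono)
  finally have "i \<le> m * m" using i(2) by linarith
  then have "real i * r \<le> real (m * m) * r"
    using assms(3) by (intro mult_right_mono) (simp_all only: of_nat_le_iff)
  moreover have "gdist E x y \<le> ereal (real i * r)"
    by (rule gdist_le_relpow[OF _ assms(3) i(1)]) (use assms(2) in blast)
  ultimately show ?thesis using order_trans ereal_less_eq(3) by blast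
qed

section \<open>Control functions from clustered colourings\<close>

definition colour_classes :: "('a \<times> 'a) set \<Rightarrow> 'a set \<Rightarrow> ('a \<Rightarrow> bool) \<Rightarrow> nat \<Rightarrow> 'a set set" where
  "colour_classes H V c i = {component (mono_edges H c) V v | v. v \<in> V \<and> c v = (i = 0)}"

lemma colour_classes_cover: "(\<Union>i\<le>1. \<Union>(colour_classes H V c i)) = V"
proof
  show "(\<Union>i\<le>1. \<Union>(colour_classes H V c i)) \<subseteq> V"
    using component_subset by (fastforce simp: colour_classes_def)
  show "V \<subseteq> (\<Union>i\<le>1. \<Union>(colour_classes H V c i))"
  proof
    fix v assume "v \<in> V"
    then have "v \<in> \<Union>(colour_classes H V c (if c v then 0 else 1))"
      using component_refl by (auto simp: colour_classes_def)
    then show "v \<in> (\<Union>i\<le>1. \<Union>(colour_classes H V c i))" by (auto split: if_splits)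
  qed
qed

lemma r_disjoint_colour_classes:
  assumes "sym E"
  shows "r_disjoint E r (colour_classes (dist_graph V E r) V c i)"
  unfolding r_disjoint_def
proof (intro ballI impI)
  let ?C = "component (mono_edges (dist_graph V E r) c) V"
  have sym: "sym (mono_edges (dist_graph V E r) c)"
    using sym_mono_edges sym_dist_graph assms by blast
  fix A B x y assume AB: "A \<in> colour_classes (dist_graph V E r) V c i" "B \<in> colour_classes (dist_graph V E r) V c i"
    "A \<noteq> B" and xy: "x \<in> A" "y \<in> B"
  from AB(1) obtain v where v: "A = ?C v" "v \<in> V" "c v = (i = 0)" unfolding colour_classes_def by blast
  from AB(2) obtain w where w: "B = ?C w" "w \<in> V" "c w = (i = 0)" unfolding colour_classes_def by blast
  have x: "x \<in> ?C v" "x \<in> V" using xy(1) v component_subset[OF v(2)] by auto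
  have y: "y \<in> ?C w" "y \<in> V" using xy(2) w component_subset[OF w(2)] by auto
  have "c x = c y"
    using mono_component_colour[OF x(1)] mono_component_colour[OF y(1)] v(3) w(3) by simp
  show "ereal r < gdist E x y"
  proof (rule ccontr)
    assume "\<not> ereal r < gdist E x y"
    with x(2) y(2) \<open>c x = c y\<close> have "(x, y) \<in> mono_edges (dist_graph V E r) c"
      by (simp add: mono_edges_def dist_graph_def)
    then have "y \<in> ?C x" using x(2) y(2) by (rule component_step[OF component_refl])
    then have "?C y = ?C x" by (rule component_eq[OF sym])
    moreover have "?C x = A" using component_eq[OF sym x(1)] v(1) by simp
    moreover have "?C y = B" using component_eq[OF sym y(1)] w(1) by simp
    ultimately show False using AB(3) by simp
  qed
qed

lemma D_bounded_colour_classes: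
  assumes "finite V" "sym E" "0 \<le> r"
    and small: "\<forall>v\<in>V. card (component (mono_edges (dist_graph V E r) c) V v) \<le> m"
  shows "D_bounded E (real (m * m) * r) (colour_classes (dist_graph V E r) V c i)"
  unfolding D_bounded_def
proof (intro ballI)
  let ?C = "component (mono_edges (dist_graph V E r) c) V"
  fix A x y assume "A \<in> colour_classes (dist_graph V E r) V c i" "x \<in> A" "y \<in> A"
  then obtain v where v: "A = ?C v" "v \<in> V" by (auto simp: colour_classes_def)
  have "sym (mono_edges (dist_graph V E r) c)"
    using sym_mono_edges sym_dist_graph assms(2) by blast
  moreover have "mono_edges (dist_graph V E r) c \<subseteq> {(x, y). gdist E x y \<le> ereal r}"
    by (auto simp: mono_edges_def dist_graph_def)
  moreover have "finite (?C v)" using component_subset[OF v(2)] assms(1) by (rule finite_subset)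
  moreover have "card (?C v) \<le> m" using small v(2) by blast
  ultimately show "gdist E x y \<le> ereal (real (m * m) * r)"
    using \<open>x \<in> A\<close> \<open>y \<in> A\<close> v(1) by (intro gdist_le_in_small_component[OF _ _ assms(3)]) simp_all
qed

lemma control_function_of_clustering:
  assumes "fin_graph V E"
    and "\<And>r. 0 < r \<Longrightarrow> \<exists>c. \<forall>v\<in>V. card (component (mono_edges (dist_graph V E r) c) V v) \<le> m r"
  shows "control_function 1 (\<lambda>r. real (m r * m r) * r) V E"
  unfolding control_function_def
proof (intro allI impI)
  fix r :: real assume "0 < r"
  then obtain c where small: "\<forall>v\<in>V. card (component (mono_edges (dist_graph V E r) c) V v) \<le> m r"
    using assms(2) by blast
  have V: "finite V" "sym E" using assms(1) by (auto simp: fin_graph_def)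
  let ?\<U> = "colour_classes (dist_graph V E r) V c"
  have "r_disjoint E r (?\<U> i)" for i using r_disjoint_colour_classes[OF V(2)] .
  moreover have "D_bounded E (real (m r * m r) * r) (?\<U> i)" for i
    using D_bounded_colour_classes[OF V _ small] \<open>0 < r\<close> by simp
  ultimately show "\<exists>\<U> :: nat \<Rightarrow> 'a set set. (\<Union>i\<le>1. \<Union>(\<U> i)) = V \<and>
      (\<forall>i\<le>1. r_disjoint E r (\<U> i) \<and> D_bounded E (real (m r * m r) * r) (\<U> i))"
    using colour_classes_cover[of "dist_graph V E r" V c] by (intro exI[of _ ?\<U>]) simp
qed

lemma treewidth_attained:
  assumes "fin_graph V E"
  obtains N :: "nat set" and F B where "tree_decomposition V E N F B" "td_width N B = treewidth V E"
proof -
  define P where "P k \<longleftrightarrow> (\<exists>(N :: nat set) F B. tree_decomposition V E N F B \<and> td_width N B = k)" for k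
  have "is_tree {0 :: nat} {}" "connected_in {} {0 :: nat}"
    by (auto simp: is_tree_def fin_graph_def connected_in_def sym_def intro!: exI[of _ "[0 :: nat]"])
  then have "tree_decomposition V E {0} {} (\<lambda>_. V)"
    using assms by (auto simp: tree_decomposition_def fin_graph_def)
  then have "P (td_width {0} (\<lambda>_. V))" by (auto simp: P_def)
  then obtain w where w: "P w" and min: "\<And>k. P k \<Longrightarrow> nat (w + 1) \<le> nat (k + 1)"
    using ex_has_least_nat[of P _ "\<lambda>k. nat (k + 1)"] by blast
  have ge: "-1 \<le> k" if "P k" for k
    using that by (auto simp: P_def td_width_def)
  have "w \<le> k" if "P k" for k
    using min[OF that] ge[OF that] by (simp add: nat_le_eq_zle)
  with w have "treewidth V E = w"
    unfolding treewidth_def P_def[symmetric] by (rule Least_equality)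
  moreover obtain N F B where "tree_decomposition V E N F B" "td_width N B = w"
    using w unfolding P_def by blast
  ultimately show ?thesis using that by simp
qed

lemma bag_card_le_width:
  assumes "tree_decomposition V E N F B" "n \<in> N"
  shows "int (card (B n)) \<le> td_width N B + 1"
proof -
  have "finite N" using assms(1) by (simp add: tree_decomposition_def is_tree_def fin_graph_def)
  then show ?thesis using assms(2) by (simp add: td_width_def)
qed

lemma card_neighbours_le_max_degree:
  assumes "fin_graph V E"
  shows "card (E `` {v}) \<le> max_degree V E"
proof (cases "v \<in> V")
  case True
  then show ?thesis
    using assms by (auto simp: max_degree_def fin_graph_def Image_singleton intro!: Max_ge)
next
  case False
  then have "E `` {v} = {}" using assms by (auto simp: fin_graph_def)
  then show ?thesis by simp
qed

theorem theorem5p5: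
  fixes t \<Delta> :: int
  shows "asdim_at_most 1
           {(V, E :: (nat \<times> nat) set). fin_graph V E \<and> treewidth V E \<le> t \<and> int (max_degree V E) \<le> \<Delta>}"
proof -
  let ?m = "cluster_bound (nat (t + 1)) (nat \<Delta>)"
  have "control_function 1 (\<lambda>r. real (?m r * ?m r) * r) V E"
    if G: "fin_graph V E" "treewidth V E \<le> t" "int (max_degree V E) \<le> \<Delta>" for V :: "nat set" and E
  proof (rule control_function_of_clustering[OF G(1)])
    obtain N F B where td: "tree_decomposition V E N F B" "td_width N B = treewidth V E"
      using treewidth_attained[OF G(1)] .
    then have "\<forall>n\<in>N. card (B n) \<le> nat (t + 1)"
      using bag_card_le_width[OF td(1)] G(2) by fastforce
    moreover have "card (E `` {v}) \<le> nat \<Delta>" for v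
      using card_neighbours_le_max_degree[OF G(1), of v] G(3) by linarith
    ultimately show "\<exists>c. \<forall>v\<in>V. card (component (mono_edges (dist_graph V E r) c) V v) \<le> ?m r"
      if "0 < r" for r
      using dist_graph_clustered[OF G(1) td(1)] that by simp
  qed
  moreover have "0 < real (?m r * ?m r) * r" if "0 < r" for r
    using cluster_bound_pos that by simp
  ultimately show ?thesis
    unfolding asdim_at_most_def by (intro exI[of _ "\<lambda>r. real (?m r * ?m r) * r"]) auto
qed

end
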